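(* Let $V=\coprod_{n\in\mathbb{Z}}V_{(n)}$ be a $\mathbb{Z}$-graded vertex algebra, $W=\coprod_{n\in\mathbb{N}}W_{(n)}$ an $\mathbb{N}$-graded vector space and $Y_W:V\otimes W\to W((x))$ a linear map, $Y_W(u,x)=\sum_nu_nx^{-n-1}$, such that $u_n$ maps $W_{(j)}$ into $W_{(j+m-n-1)}$ for $u\in V_{(m)}$. Assume that for all homogeneous $u,v\in V$, homogeneous $w\in W$ and $p,q\in\mathbb{Z}$ with $q<k:=\mathrm{wt}\,v+\deg w$, setting $l=\mathrm{wt}\,u+\deg w$, $$\mathrm{Res}_{x_0}\mathrm{Res}_{x_2}(x_0+x_2)^px_2^qY_W(u,x_0+x_2)Y_W(v,x_2)w=\mathrm{Res}_{x_0}\mathrm{Res}_{x_2}\Big(\sum_{i=0}^{k-q-1}\tbinom{p-l}{i}x_0^{p-l-i}x_2^i\Big)x_2^q(x_0+x_2)^lY_W(Y(u,x_0)v,x_2)w.$$ Then for all $u,v\in V$, homogeneous $w\in W$ and $p',q'\in\mathbb{Z}$ with $q'<\deg w$, $$\mathrm{Res}_{x_1}\mathrm{Res}_{x_2}x_1^{p'}x_2^{q'}Y_W(x_1^{L(0)}u,x_1)Y_W(x_2^{L(0)}v,x_2)w=\mathrm{Res}_{x_0}\mathrm{Res}_{x_2}\,Q(x_0,x_2)\,x_2^{q'}(x_0+x_2)^{\deg w}Y_W(Y((x_0+x_2)^{L(0)}u,x_0)x_2^{L(0)}v,x_2)w,$$ where $Q(x_0,x_2)=\sum_{i=0}^{\deg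 w-q'-1}\binom{p'-\deg w}{i}x_0^{p'-\deg w-i}x_2^i$.
   Context: A $\mathbb{Z}$-graded vertex algebra is a vertex algebra $(V,Y,\mathbf{1})$ with $V=\coprod_{n\in\mathbb{Z}}V_{(n)}$ and $[d,Y(u,x)]=x\frac{d}{dx}Y(u,x)+Y(du,x)$ where $du=nu$ for $u\in V_{(n)}$; $\mathrm{wt}\,u=n$ for $u\in V_{(n)}$, and $L(0)=d$, so $x^{L(0)}u=x^{\mathrm{wt}\,u}u$ for homogeneous $u$ (extended linearly). For $w\in W_{(n)}$, $\deg w=n$. Expressions $(x_0+x_2)^n$ and $Y_W(u,x_0+x_2)$ are expanded in nonnegative powers of $x_2$. *)

theory Defs
  imports Complex_Main
begin

text \<open>Formal (finitely supported) sums: sum over the support. If the support is infinite the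
  expression has no formal meaning; Isabelle's convention then gives 0.\<close>
definition fsum :: "('i \<Rightarrow> 'a::comm_monoid_add) \<Rightarrow> 'a" where
  "fsum f = sum f {i. f i \<noteq> 0}"

definition cbinom :: "int \<Rightarrow> nat \<Rightarrow> complex" where
  "cbinom a i = (of_int a) gchoose i"

definition signpow :: "int \<Rightarrow> complex" where
  "signpow r = (if even r then 1 else -1)"

text \<open>A graded vector space, given by its family of projections onto the homogeneous
  components (direct sum decomposition).\<close>
definition graded_space :: "(complex \<Rightarrow> 'v::ab_group_add \<Rightarrow> 'v) \<Rightarrow> ('i \<Rightarrow> 'v \<Rightarrow> 'v) \<Rightarrow> bool" where
  "graded_space s P \<longleftrightarrow>
     (\<forall>n. Vector_Spaces.linear s s (P n)) \<and>
     (\<forall>m n v. P m (P n v) = (if m = n then P n v else 0)) \<and>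
     (\<forall>v. finite {n. P n v \<noteq> 0} \<and> v = (\<Sum>n\<in>{n. P n v \<noteq> 0}. P n v))"

text \<open>Z-graded vertex algebra (V, Y, 1) over the complex numbers; Y u n v is the mode u_n v.
  The d-bracket condition is expressed in the equivalent form: u_n maps V_(j) into V_(j+m-n-1)
  for u in V_(m).  The Jacobi identity is stated in its component (Borcherds) form.\<close>
definition Zgraded_vertex_algebra ::
  "(complex \<Rightarrow> 'v::ab_group_add \<Rightarrow> 'v) \<Rightarrow> ('v \<Rightarrow> int \<Rightarrow> 'v \<Rightarrow> 'v) \<Rightarrow> 'v \<Rightarrow> (int \<Rightarrow> 'v \<Rightarrow> 'v) \<Rightarrow> bool" where
  "Zgraded_vertex_algebra s Y one P \<longleftrightarrow>
     vector_space s \<and>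
     (\<forall>n v. Vector_Spaces.linear s s (\<lambda>u. Y u n v)) \<and>
     (\<forall>u n. Vector_Spaces.linear s s (Y u n)) \<and>
     (\<forall>u v. \<exists>N. \<forall>n\<ge>N. Y u n v = 0) \<and>
     (\<forall>n v. Y one n v = (if n = -1 then v else 0)) \<and>
     (\<forall>u. (\<forall>n\<ge>0. Y u n one = 0) \<and> Y u (-1) one = u) \<and>
     (\<forall>u v w r p q.
        fsum (\<lambda>i::nat. s (cbinom p i) (Y (Y u (r + int i) v) (p + q - int i) w)) =
        fsum (\<lambda>i::nat. s ((-1) ^ i * cbinom r i)
              (Y u (p + r - int i) (Y v (q + int i) w) - s (signpow r) (Y v (q + r - int i) (Y u (p + int i) w))))) \<and>
     graded_space s P \<and>
     (\<forall>m j n u v. P m u = u \<longrightarrow> P j v = v \<longrightarrow> P (j + m - n - 1) (Y u n v) = Y u n v)"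

definition PWi :: "(nat \<Rightarrow> 'w \<Rightarrow> 'w::zero) \<Rightarrow> int \<Rightarrow> 'w \<Rightarrow> 'w" where
  "PWi PW k w = (if k < 0 then 0 else PW (nat k) w)"

end

theory Submission
  imports Defs
begin

text \<open>The hypothesis, applied to the homogeneous components P m u and P m' v with the
  exponents shifted by their weights, is the required identity term by term. Indeed, after
  expanding (x0 + x2)^p Y_W(u, x0 + x2), the residue in x0 keeps only the coefficients
  binom(p - n - 1, p - n), which vanish unless n = p; so the left-hand side of the hypothesis is
  just u_p v_q w, and inserting x^L(0) merely shifts the mode indices by the weights.\<close>

lemma cbinom_pred_self:
  assumes "k > 0"
  shows "cbinom (k - 1) (nat k) = 0"
proof -
  have "k - 1 = int (nat k - 1)" using assms by simp
  then have "cbinom (k - 1) (nat k) = of_nat ((nat k - 1) choose nat k)"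
    unfolding cbinom_def by (metis binomial_gbinomial of_int_of_nat_eq)
  then show ?thesis using assms by simp
qed

lemma fsum_delta: "fsum (\<lambda>n. if n = p then x else 0) = x"
  unfolding fsum_def by (cases "x = 0") auto

lemma fsum_cbinom_pred_residue:
  fixes X :: "int \<Rightarrow> 'w::ab_group_add"
  assumes "vector_space s"
  shows "fsum (\<lambda>n. if p - n \<ge> 0 then s (cbinom (p - n - 1) (nat (p - n))) (X n) else 0) = X p"
proof -
  interpret vector_space s by (rule assms)
  have "(if p - n \<ge> 0 then s (cbinom (p - n - 1) (nat (p - n))) (X n) else 0)
        = (if n = p then X p else 0)" for n
  proof (cases "n < p")
    case True
    then show ?thesis using cbinom_pred_self[of "p - n"] by simp
  qed (auto simp: cbinom_def)
  then show ?thesis by (simp add: fsum_delta)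
qed

theorem lemma5p1:
  fixes sV :: "complex \<Rightarrow> 'v::ab_group_add \<Rightarrow> 'v"
    and Y :: "'v \<Rightarrow> int \<Rightarrow> 'v \<Rightarrow> 'v"
    and one :: 'v
    and P :: "int \<Rightarrow> 'v \<Rightarrow> 'v"
    and sW :: "complex \<Rightarrow> 'w::ab_group_add \<Rightarrow> 'w"
    and PW :: "nat \<Rightarrow> 'w \<Rightarrow> 'w"
    and YW :: "'v \<Rightarrow> int \<Rightarrow> 'w \<Rightarrow> 'w"
  assumes VA: "Zgraded_vertex_algebra sV Y one P"
    and W_vs: "vector_space sW"
    and W_graded: "graded_space sW PW"
    and YW_lin1: "\<forall>n w. Vector_Spaces.linear sV sW (\<lambda>u. YW u n w)"
    and YW_lin2: "\<forall>u n. Vector_Spaces.linear sW sW (YW u n)"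
    and YW_trunc: "\<forall>u w. \<exists>N. \<forall>n\<ge>N. YW u n w = 0"
    and YW_deg: "\<forall>m n j u w. P m u = u \<longrightarrow> PW j w = w \<longrightarrow>
                   PWi PW (int j + m - n - 1) (YW u n w) = YW u n w"
    and hyp: "\<forall>u v w m m' D p q. P m u = u \<longrightarrow> P m' v = v \<longrightarrow> PW D w = w \<longrightarrow> q < m' + int D \<longrightarrow>
       fsum (\<lambda>n::int. if p - n \<ge> 0
                 then sW (cbinom (p - n - 1) (nat (p - n))) (YW u n (YW v (q + p - n) w)) else 0)
       = (\<Sum>i<nat (m' + int D - q). fsum (\<lambda>j::nat.
            sW (cbinom (p - (m + int D)) i * cbinom (m + int D) j)
               (YW (Y u (p - int i - int j) v) (q + int i + int j) w)))"
  shows "\<forall>u v w D p' q'. PW D w = w \<longrightarrow> q' < int D \<longrightarrow>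
       fsum (\<lambda>m. fsum (\<lambda>m'. YW (P m u) (p' + m) (YW (P m' v) (q' + m') w)))
       = fsum (\<lambda>m. fsum (\<lambda>m'. \<Sum>i<nat (int D - q'). fsum (\<lambda>j::nat.
            sW (cbinom (p' - int D) i * cbinom (m + int D) j)
               (YW (Y (P m u) (p' + m - int i - int j) (P m' v)) (q' + m' + int i + int j) w))))"
proof (intro allI impI)
  fix u v w D p' q'
  assume w: "PW D w = w" and q': "q' < int D"
  have P_idem: "P m (P m x) = P m x" for m x
    using VA unfolding Zgraded_vertex_algebra_def graded_space_def by simp
  have component: "YW (P m u) (p' + m) (YW (P m' v) (q' + m') w)
     = (\<Sum>i<nat (int D - q'). fsum (\<lambda>j::nat.
            sW (cbinom (p' - int D) i * cbinom (m + int D) j)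
               (YW (Y (P m u) (p' + m - int i - int j) (P m' v)) (q' + m' + int i + int j) w)))"
    for m m'
    using hyp[rule_format, of m "P m u" m' "P m' v" D w "q' + m'" "p' + m"] P_idem w q'
      fsum_cbinom_pred_residue[OF W_vs, of "p' + m"
        "\<lambda>n. YW (P m u) n (YW (P m' v) (q' + m' + (p' + m) - n) w)"]
    by simp
  show "fsum (\<lambda>m. fsum (\<lambda>m'. YW (P m u) (p' + m) (YW (P m' v) (q' + m') w)))
       = fsum (\<lambda>m. fsum (\<lambda>m'. \<Sum>i<nat (int D - q'). fsum (\<lambda>j::nat.
            sW (cbinom (p' - int D) i * cbinom (m + int D) j)
               (YW (Y (P m u) (p' + m - int i - int j) (P m' v)) (q' + m' + int i + int j) w))))"
    by (simp only: component)
qed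

end
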